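(* Let $T$ be a rooted tree, let $v$ be a vertex, and let $l$ be an integer with $l>\mathrm{level}(v)$. Let $u$ be the first vertex appearing after the first occurrence of $v$ in the Euler tour of $T$ such that $\mathrm{level}(u)\ge l$. If $u$ exists and is a descendant of $v$, then $u$ is the first level-$l$ descendant of $v$ (in preorder); otherwise $v$ has no descendant at level $l$. Equivalently, a vertex $u$ is the first level-$l$ descendant of $v$ if and only if it is that first vertex and it is a descendant of $v$.
   Context: The level of the root $r$ is $0$, and each other vertex has level one more than its parent. The Euler tour of $T$ is the sequence of $2n-1$ vertices (where $n$ is the number of vertices) obtained by traversing $T$ depth-first starting and ending at the root, each tree edge traversed once downward and once upward, listing the current vertex initially and after every step. "First level-$l$ descendant" means the first, in preorder, among the descendants of $v$ at level $l$. *)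

theory Defs
  imports Main "HOL-Library.Sublist"
begin

text \<open>Rooted ordered trees. A vertex is identified with its position: the list of
  child indices on the path from the root (the root is the empty list).\<close>

datatype tree = Node "tree list"

lemma size_nth_less[termination_simp]: "i < length ts \<Longrightarrow> size (ts ! i) < Suc (size_list size ts)"
  using size_list_estimation'[of "ts ! i" ts "size (ts ! i)" size] nth_mem by fastforce

fun vertices_pre :: "tree \<Rightarrow> nat list list" where
  "vertices_pre (Node ts) =
     [] # concat (map (\<lambda>i. map (Cons i) (vertices_pre (ts ! i))) [0..<length ts])"

fun euler_tour :: "tree \<Rightarrow> nat list list" where
  "euler_tour (Node ts) =
     [] # concat (map (\<lambda>i. map (Cons i) (euler_tour (ts ! i)) @ [[]]) [0..<length ts])"

definition preorder :: "tree \<Rightarrow> nat list list" where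
  "preorder t = vertices_pre t"

definition level :: "nat list \<Rightarrow> nat" where
  "level v = length v"

definition is_descendant :: "nat list \<Rightarrow> nat list \<Rightarrow> bool" where
  "is_descendant u v \<longleftrightarrow> prefix v u"

definition first_level_desc :: "tree \<Rightarrow> nat list \<Rightarrow> nat \<Rightarrow> nat list option" where
  "first_level_desc t v l = find (\<lambda>w. is_descendant w v \<and> level w = l) (preorder t)"

definition euler_next :: "tree \<Rightarrow> nat list \<Rightarrow> nat \<Rightarrow> nat list option" where
  "euler_next t v l = find (\<lambda>w. l \<le> level w) (tl (dropWhile (\<lambda>w. w \<noteq> v) (euler_tour t)))"

end

theory Submission
  imports Defs
begin

text \<open>A vertex is the path of child indices leading to it, so the descendants of \<open>v\<close> are
  the vertices with prefix \<open>v\<close>. In preorder they form the block \<open>v @ w\<close>, \<open>w\<close> ranging over the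
  preorder of the subtree at \<open>v\<close>; in the Euler tour, the first occurrence of \<open>v\<close> starts the
  block \<open>v @ w\<close>, \<open>w\<close> ranging over the Euler tour of that subtree, and after it no proper
  descendant of \<open>v\<close> occurs again. Since the tour changes the level by one per step and reaches
  every vertex for the first time in preorder, the first tour vertex of level \<open>\<ge> k\<close> is the first
  preorder vertex of level exactly \<open>k\<close>.\<close>

fun subtree :: "tree \<Rightarrow> nat list \<Rightarrow> tree" where
  "subtree t [] = t"
| "subtree (Node ts) (i # v) = (if i < length ts then subtree (ts ! i) v else Node [])"

lemma find_append:
  "find P (xs @ ys) = (case find P xs of None \<Rightarrow> find P ys | Some x \<Rightarrow> Some x)"
  by (induction xs) auto

lemma find_map: "find P (map f xs) = map_option f (find (P \<circ> f) xs)"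
  by (induction xs) auto

lemma find_filter: "find P (filter Q xs) = find (\<lambda>x. Q x \<and> P x) xs"
  by (induction xs) auto

lemma find_concat_map_cong:
  assumes "\<And>x. x \<in> set xs \<Longrightarrow> find P (f x) = find Q (g x)"
  shows "find P (concat (map f xs)) = find Q (concat (map g xs))"
  using assms by (induction xs) (auto simp: find_append split: option.splits)

lemma set_euler_tour: "set (euler_tour t) = set (vertices_pre t)"
  by (induction t rule: vertices_pre.induct) auto

lemma find_length_ge_euler_tour:
  "find (\<lambda>w. k \<le> length w) (euler_tour t) = find (\<lambda>w. length w = k) (vertices_pre t)"
proof (induction t arbitrary: k rule: vertices_pre.induct)
  case (1 ts)
  show ?case
  proof (cases k)
    case (Suc k')
    have "find (\<lambda>w. k \<le> length w) (map (Cons i) (euler_tour (ts ! i)) @ [[]])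
        = find (\<lambda>w. length w = k) (map (Cons i) (vertices_pre (ts ! i)))"
      if "i \<in> set [0..<length ts]" for i
      using that "1.IH"[of i k'] Suc by (simp add: find_append find_map o_def split: option.split)
    then have "find (\<lambda>w. k \<le> length w)
        (concat (map (\<lambda>i. map (Cons i) (euler_tour (ts ! i)) @ [[]]) [0..<length ts]))
      = find (\<lambda>w. length w = k) (concat (map (\<lambda>i. map (Cons i) (vertices_pre (ts ! i))) [0..<length ts]))"
      by (rule find_concat_map_cong)
    then show ?thesis
      using Suc by simp
  qed simp
qed

lemma concat_map_if_eq:
  "distinct xs \<Longrightarrow> i \<in> set xs \<Longrightarrow> concat (map (\<lambda>j. if j = i then f j else []) xs) = f i"
  by (induction xs) auto

lemma upt_split: "i < n \<Longrightarrow> [0..<n] = [0..<i] @ i # [Suc i..<n]"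
  by (metis upt_add_eq_append upt_conv_Cons le_add_diff_inverse less_imp_le_nat zero_le)

lemma Cons_in_vertices_pre:
  "i # v \<in> set (vertices_pre (Node ts)) \<longleftrightarrow> i < length ts \<and> v \<in> set (vertices_pre (ts ! i))"
  by auto

lemma filter_prefix_map_Cons:
  "filter (prefix (i # v)) (map (Cons j) xs) = (if j = i then map (Cons i) (filter (prefix v) xs) else [])"
  by (induction xs) auto

lemma filter_prefix_vertices_pre:
  "v \<in> set (vertices_pre t) \<Longrightarrow>
     filter (prefix v) (vertices_pre t) = map ((@) v) (vertices_pre (subtree t v))"
proof (induction t arbitrary: v rule: vertices_pre.induct)
  case (1 ts)
  show ?case
  proof (cases v)
    case (Cons i v')
    with "1.prems" have i: "i < length ts" and v': "v' \<in> set (vertices_pre (ts ! i))"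
      by (auto simp only: Cons_in_vertices_pre)
    have "filter (prefix v) (vertices_pre (Node ts))
        = concat (map (\<lambda>j. if j = i then map (Cons j) (filter (prefix v') (vertices_pre (ts ! j))) else [])
            [0..<length ts])"
      by (simp add: Cons filter_concat filter_prefix_map_Cons o_def cong: if_cong)
    also have "\<dots> = map (Cons i) (filter (prefix v') (vertices_pre (ts ! i)))"
      using i by (simp add: concat_map_if_eq)
    finally show ?thesis
      using "1.IH"[OF _ v'] i Cons by simp
  qed (simp add: filter_True)
qed

lemma dropWhile_neq_map_Cons:
  "dropWhile (\<lambda>w. w \<noteq> i # v) (map (Cons i) xs) = map (Cons i) (dropWhile (\<lambda>w. w \<noteq> v) xs)"
  by (induction xs) auto

lemma dropWhile_euler_tour:
  "v \<in> set (vertices_pre t) \<Longrightarrow>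
     \<exists>ys. dropWhile (\<lambda>w. w \<noteq> v) (euler_tour t) = map ((@) v) (euler_tour (subtree t v)) @ ys
         \<and> (\<forall>w\<in>set ys. \<not> strict_prefix v w)"
proof (induction t arbitrary: v rule: vertices_pre.induct)
  case (1 ts)
  show ?case
  proof (cases v)
    case (Cons i v')
    with "1.prems" have i: "i < length ts" and v': "v' \<in> set (vertices_pre (ts ! i))"
      by (auto simp only: Cons_in_vertices_pre)
    obtain ys where ys: "dropWhile (\<lambda>w. w \<noteq> v') (euler_tour (ts ! i))
        = map ((@) v') (euler_tour (subtree (ts ! i) v')) @ ys"
      and ys_outside: "\<forall>w\<in>set ys. \<not> strict_prefix v' w"
      using "1.IH"[OF _ v'] i by auto
    define B where "B = (\<lambda>j. map (Cons j) (euler_tour (ts ! j)) @ [[]])"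
    define rest where "rest = concat (map B [Suc i..<length ts])"
    have "euler_tour (Node ts) = ([] # concat (map B [0..<i])) @ B i @ rest"
      by (subst euler_tour.simps, subst upt_split[OF i]) (simp add: B_def rest_def)
    moreover have "v \<notin> set ([] # concat (map B [0..<i]))"
      by (auto simp: B_def Cons)
    moreover have "v \<in> set (map (Cons i) (euler_tour (ts ! i)))"
      using v' Cons set_euler_tour by auto
    ultimately have "dropWhile (\<lambda>w. w \<noteq> v) (euler_tour (Node ts))
        = map (Cons i) (dropWhile (\<lambda>w. w \<noteq> v') (euler_tour (ts ! i))) @ [[]] @ rest"
      by (auto simp: B_def Cons dropWhile_append dropWhile_neq_map_Cons)
    also have "\<dots> = map ((@) v) (euler_tour (subtree (Node ts) v)) @ (map (Cons i) ys @ [[]] @ rest)"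
      using ys i Cons by simp
    finally show ?thesis
      using ys_outside by (auto simp: Cons rest_def B_def)
  qed simp
qed

lemma euler_tour_starts_at_root: "euler_tour t = [] # tl (euler_tour t)"
  by (cases t) simp

lemma first_level_desc_subtree:
  assumes "v \<in> set (preorder t)" and "level v \<le> l"
  shows "first_level_desc t v l
    = map_option ((@) v) (find (\<lambda>w. length w = l - level v) (vertices_pre (subtree t v)))"
proof -
  have "first_level_desc t v l = find (\<lambda>w. length w = l) (filter (prefix v) (vertices_pre t))"
    by (simp add: first_level_desc_def find_filter preorder_def is_descendant_def level_def)
  also have "\<dots> = map_option ((@) v) (find (\<lambda>w. length (v @ w) = l) (vertices_pre (subtree t v)))"
    using assms(1) by (simp add: filter_prefix_vertices_pre preorder_def find_map o_def)
  also have "(\<lambda>w. length (v @ w) = l) = (\<lambda>w. length w = l - level v)"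
    using assms(2) by (auto simp: level_def)
  finally show ?thesis .
qed

lemma euler_next_subtree:
  assumes "v \<in> set (preorder t)" and "level v < l"
  obtains ys where "\<forall>w\<in>set ys. \<not> strict_prefix v w"
    and "euler_next t v l = (case first_level_desc t v l of None \<Rightarrow> find (\<lambda>w. l \<le> level w) ys | Some u \<Rightarrow> Some u)"
proof -
  obtain ys where ys: "dropWhile (\<lambda>w. w \<noteq> v) (euler_tour t) = map ((@) v) (euler_tour (subtree t v)) @ ys"
    and ys_outside: "\<forall>w\<in>set ys. \<not> strict_prefix v w"
    using dropWhile_euler_tour assms(1) unfolding preorder_def by blast
  have "find (\<lambda>w. l \<le> level w) (map ((@) v) (euler_tour (subtree t v)))
      = map_option ((@) v) (find (\<lambda>w. l - level v \<le> length w) (euler_tour (subtree t v)))"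
    using assms(2) by (simp add: find_map o_def level_def le_diff_conv add.commute cong: find_cong)
  also have "\<dots> = first_level_desc t v l"
    using assms by (simp add: first_level_desc_subtree find_length_ge_euler_tour)
  finally have "euler_next t v l = (case first_level_desc t v l of None \<Rightarrow> find (\<lambda>w. l \<le> level w) ys | Some u \<Rightarrow> Some u)"
    using assms(2) unfolding euler_next_def ys
    by (subst (asm) euler_tour_starts_at_root, subst euler_tour_starts_at_root) (simp add: find_append)
  with ys_outside that show ?thesis by blast
qed

lemma euler_next_descendant_iff_first_level_desc:
  assumes "v \<in> set (preorder t)" and "level v < l"
  shows "euler_next t v l = Some u \<and> is_descendant u v \<longleftrightarrow> first_level_desc t v l = Some u"
proof -
  obtain ys where ys_outside: "\<forall>w\<in>set ys. \<not> strict_prefix v w"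
    and next_eq: "euler_next t v l = (case first_level_desc t v l of None \<Rightarrow> find (\<lambda>w. l \<le> level w) ys | Some u \<Rightarrow> Some u)"
    using euler_next_subtree[OF assms] .
  have "is_descendant w v" if "first_level_desc t v l = Some w" for w
    using that by (auto simp: first_level_desc_def find_Some_iff)
  moreover have "\<not> is_descendant w v" if "find (\<lambda>w. l \<le> level w) ys = Some w" for w
    using that ys_outside assms(2)
    by (auto simp: find_Some_iff is_descendant_def level_def strict_prefix_def)
  ultimately show ?thesis
    using next_eq by (auto split: option.splits)
qed

theorem mainTheorem5:
  fixes t :: tree and v :: "nat list" and l :: nat
  assumes "v \<in> set (preorder t)" and "level v < l"
  shows "(\<forall>u. euler_next t v l = Some u \<and> is_descendant u v
              \<longrightarrow> first_level_desc t v l = Some u)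
       \<and> (\<not> (\<exists>u. euler_next t v l = Some u \<and> is_descendant u v)
              \<longrightarrow> \<not> (\<exists>w\<in>set (preorder t). is_descendant w v \<and> level w = l))
       \<and> (\<forall>u. first_level_desc t v l = Some u \<longleftrightarrow>
              (euler_next t v l = Some u \<and> is_descendant u v))"
  using euler_next_descendant_iff_first_level_desc[OF assms]
  by (auto simp: first_level_desc_def find_None_iff split: option.splits)

end
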